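(* Let $\bm{p},\bm{v},\bm{w}\in\mathbb{R}^3$ with $\bm{v},\bm{w}$ linearly independent, let $\pi=\{(y_1,y_2)\in\mathbb{R}^2 : 0<y_1<1,\ 0<y_2<y_1\}$, and let $\tau=\{\bm{p}+y_1\bm{v}+y_2\bm{w} : (y_1,y_2)\in\pi\}$ be the flat triangle parametrised by $\chi_\tau(\bm{y})=\bm{p}+y_1\bm{v}+y_2\bm{w}$. Let $g_\tau=\sqrt{\det(\bm{J}^\top\bm{J})}$ with $\bm{J}=(\bm{v}\mid\bm{w})\in\mathbb{R}^{3\times 2}$, and let \[ I=\int_\tau\int_\tau \frac{1}{4\pi|\bm{y}-\bm{x}|}\,dS(\bm{y})\,dS(\bm{x}) = \frac{g_\tau^2}{4\pi}\int_{\pi\times\pi}\frac{1}{|\chi_\tau(\bm{y})-\chi_\tau(\bm{x})|}\,d\bm{y}\,d\bm{x}. \] Then \[ I=\frac{g_\tau^2}{12\pi}\int_0^1\left(\frac{1}{|\eta\bm{v}+\bm{w}|}+\frac{1}{|\eta\bm{w}+\bm{v}|}+\frac{1}{|\eta(\bm{w}+\bm{v})-\bm{w}|}\right)d\eta, \] and consequently \[ I=\frac{g_\tau^2}{12\pi}\sum_{i=1}^{3}\bigl(F_i(1)-F_i(0)\bigr),\qquad F_i(\eta)=\frac{1}{\sqrt{\alpha_i}}\ln\!\Bigl(2\sqrt{\alpha_i}\sqrt{\gamma_i+\beta_i\eta+\alpha_i\eta^2}+2\alpha_i\eta+\beta_i\Bigr), \] where $\alpha_1=|\bm{v}|^2,\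 \beta_1=2\bm{v}\cdot\bm{w},\ \gamma_1=|\bm{w}|^2$; $\alpha_2=|\bm{w}|^2,\ \beta_2=2\bm{w}\cdot\bm{v},\ \gamma_2=|\bm{v}|^2$; $\alpha_3=|\bm{w}+\bm{v}|^2,\ \beta_3=-2(\bm{w}+\bm{v})\cdot\bm{w},\ \gamma_3=|\bm{w}|^2$.
   Context: $|\cdot|$ denotes the Euclidean norm on $\mathbb{R}^3$ and $dS$ the surface measure on $\tau$. This is the Galerkin single-layer (Laplace kernel $1/(4\pi|\bm{x}-\bm{y}|)$) matrix entry for piecewise constant basis functions on a pair of identical triangles. *)

theory Defs
  imports "HOL-Analysis.Analysis"
begin

definition ref_tri :: "(real \<times> real) set" where
  "ref_tri = {(y1, y2). 0 < y1 \<and> y1 < 1 \<and> 0 < y2 \<and> y2 < y1}"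

definition chi_tau :: "real^3 \<Rightarrow> real^3 \<Rightarrow> real^3 \<Rightarrow> real \<times> real \<Rightarrow> real^3" where
  "chi_tau p v w y = p + fst y *\<^sub>R v + snd y *\<^sub>R w"

definition jac :: "real^3 \<Rightarrow> real^3 \<Rightarrow> real^2^3" where
  "jac v w = (\<chi> i j. if j = 1 then v $ i else w $ i)"

definition gram_tau :: "real^3 \<Rightarrow> real^3 \<Rightarrow> real" where
  "gram_tau v w = sqrt (det (transpose (jac v w) ** jac v w))"

definition galerkin_I :: "real^3 \<Rightarrow> real^3 \<Rightarrow> real^3 \<Rightarrow> real" where
  "galerkin_I p v w = (gram_tau v w)^2 / (4 * pi) *
     (LINT z : (ref_tri \<times> ref_tri) | lborel.
        1 / norm (chi_tau p v w (fst z) - chi_tau p v w (snd z)))"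

definition F_aux :: "real \<Rightarrow> real \<Rightarrow> real \<Rightarrow> real \<Rightarrow> real" where
  "F_aux \<alpha> \<beta> \<gamma> \<eta> = 1 / sqrt \<alpha> *
     ln (2 * sqrt \<alpha> * sqrt (\<gamma> + \<beta> * \<eta> + \<alpha> * \<eta>^2) + 2 * \<alpha> * \<eta> + \<beta>)"

end

(*
  Substituting y = x + u turns the double integral over the reference triangle T into an
  integral over u in R^2 of the kernel 1/|u1 v + u2 w|, weighted by the area of T meeting its
  translate T - u. As T is a simplex, this overlap is a copy of T scaled by 1 - rho(u), where
  rho is the gauge of the hexagon T - T, so its area is (1 - rho(u))^2/2. The kernel is even
  and homogeneous of degree -1, and rho is linear on each of the six cones spanned by adjacent
  vertices of the hexagon. Taking rho as radial coordinate, each cone contributes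
  int_0^1 (1 - r)^2/2 dr = 1/6 times the integral of the kernel along the hexagon's edge in that
  cone; opposite cones contribute equally, so the total is one third of the sum of the integrals
  of 1/|eta v + w|, 1/|eta w + v| and 1/|eta (w + v) - w| over [0, 1]. Each of these has the
  antiderivative F_aux, whose logarithm is defined because |eta a + b|^2 has negative
  discriminant when the line eta a + b avoids 0.
*)
theory Submission
  imports Defs
begin

section \<open>An antiderivative of the inverse distance to a line\<close>

lemma norm_line_power2:
  fixes a b :: "'a::real_inner"
  shows "(norm (x *\<^sub>R a + b))\<^sup>2 = (norm b)\<^sup>2 + 2 * (a \<bullet> b) * x + (norm a)\<^sup>2 * x\<^sup>2"
  by (simp only: power2_norm_eq_inner)
     (simp add: inner_add_left inner_add_right inner_commute algebra_simps power2_eq_square)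

lemma line_discriminant_neg:
  fixes a b :: "'a::real_inner"
  assumes "a \<noteq> 0" and "\<And>x. x *\<^sub>R a + b \<noteq> 0"
  shows "(2 * (a \<bullet> b))\<^sup>2 < 4 * (norm a)\<^sup>2 * (norm b)\<^sup>2"
proof -
  \<comment> \<open>the minimiser of \<open>norm (x *\<^sub>R a + b)\<close>\<close>
  define x where "x = - (a \<bullet> b) / (norm a)\<^sup>2"
  have "0 < (norm (x *\<^sub>R a + b))\<^sup>2"
    using assms(2) by simp
  also have "\<dots> = (norm b)\<^sup>2 - (a \<bullet> b)\<^sup>2 / (norm a)\<^sup>2"
    using assms(1) unfolding norm_line_power2 x_def by (simp add: field_simps power2_eq_square)
  finally show ?thesis
    using assms(1) by (simp add: field_simps power2_eq_square)
qed

lemma F_aux_has_real_derivative: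
  assumes "0 < \<alpha>" and "\<beta>\<^sup>2 < 4 * \<alpha> * \<gamma>"
  shows "(F_aux \<alpha> \<beta> \<gamma> has_real_derivative 1 / sqrt (\<gamma> + \<beta> * x + \<alpha> * x\<^sup>2)) (at x)"
proof -
  define Q where "Q y = \<gamma> + \<beta> * y + \<alpha> * y\<^sup>2" for y
  define A where "A y = 2 * sqrt \<alpha> * sqrt (Q y) + 2 * \<alpha> * y + \<beta>" for y
  have Q_gt: "(2 * \<alpha> * x + \<beta>)\<^sup>2 < 4 * \<alpha> * Q x"
    using assms by (simp add: Q_def power2_eq_square algebra_simps)
  then have "0 < 4 * \<alpha> * Q x"
    by (meson le_less_trans zero_le_power2)
  then have "0 < Q x"
    using assms(1) by (simp add: zero_less_mult_iff)
  have "\<bar>2 * \<alpha> * x + \<beta>\<bar> < 2 * sqrt \<alpha> * sqrt (Q x)"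
  proof (rule power2_less_imp_less)
    show "\<bar>2 * \<alpha> * x + \<beta>\<bar>\<^sup>2 < (2 * sqrt \<alpha> * sqrt (Q x))\<^sup>2"
      using Q_gt \<open>0 < Q x\<close> assms(1) by (simp add: power_mult_distrib)
  qed (use assms(1) \<open>0 < Q x\<close> in simp)
  then have "0 < A x"
    unfolding A_def by linarith
  have dQ: "(Q has_real_derivative \<beta> + 2 * \<alpha> * x) (at x)"
    unfolding Q_def by (auto intro!: derivative_eq_intros)
  \<comment> \<open>\<open>A\<close> reproduces itself under differentiation, so that \<open>(ln A)' = sqrt \<alpha> / sqrt Q\<close>\<close>
  have dA: "(A has_real_derivative sqrt \<alpha> * A x / sqrt (Q x)) (at x)"
    unfolding A_def using \<open>0 < Q x\<close> assms(1)
    by (auto intro!: derivative_eq_intros dQ simp: field_simps)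
  have "F_aux \<alpha> \<beta> \<gamma> = (\<lambda>y. 1 / sqrt \<alpha> * ln (A y))"
    by (simp add: fun_eq_iff F_aux_def A_def Q_def)
  moreover have "((\<lambda>y. 1 / sqrt \<alpha> * ln (A y)) has_real_derivative
      1 / sqrt \<alpha> * (1 / A x * (sqrt \<alpha> * A x / sqrt (Q x)))) (at x)"
    by (intro DERIV_cmult DERIV_chain2[OF DERIV_ln_divide[OF \<open>0 < A x\<close>] dA])
  moreover have "1 / sqrt \<alpha> * (1 / A x * (sqrt \<alpha> * A x / sqrt (Q x))) = 1 / sqrt (Q x)"
    using \<open>0 < A x\<close> assms(1) by simp
  ultimately show ?thesis
    by (simp add: Q_def)
qed

lemma F_aux_line_has_real_derivative:
  fixes a b :: "'a::real_inner"
  assumes "a \<noteq> 0" and "\<And>x. x *\<^sub>R a + b \<noteq> 0"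
  shows "(F_aux ((norm a)\<^sup>2) (2 * (a \<bullet> b)) ((norm b)\<^sup>2) has_real_derivative 1 / norm (x *\<^sub>R a + b)) (at x)"
proof -
  have "0 < (norm a)\<^sup>2"
    using assms(1) by simp
  moreover have "sqrt ((norm b)\<^sup>2 + 2 * (a \<bullet> b) * x + (norm a)\<^sup>2 * x\<^sup>2) = norm (x *\<^sub>R a + b)"
    unfolding norm_line_power2[symmetric] by simp
  ultimately show ?thesis
    using F_aux_has_real_derivative[of "(norm a)\<^sup>2" "2 * (a \<bullet> b)" "(norm b)\<^sup>2" x]
      line_discriminant_neg[OF assms]
    by metis
qed

section \<open>Overlap of the reference triangle with its translates\<close>

lemma open_ref_tri: "open ref_tri"
  unfolding ref_tri_def case_prod_beta
  by (intro open_Collect_conj open_Collect_less continuous_intros)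

lemma ref_tri_sets_borel [measurable]: "ref_tri \<in> sets borel"
  by (simp add: open_ref_tri)

definition tri_gauge :: "real \<times> real \<Rightarrow> real" where
  "tri_gauge u = max 0 (fst u) + max 0 (snd u - fst u) + max 0 (- snd u)"

lemma borel_measurable_tri_gauge [measurable]: "tri_gauge \<in> borel_measurable borel"
  unfolding tri_gauge_def by (intro borel_measurable_continuous_onI continuous_intros)

lemma tri_gauge_uminus [simp]: "tri_gauge (- u) = tri_gauge u"
  by (simp add: tri_gauge_def max_def)

lemma nn_integral_ramp:
  "(\<integral>\<^sup>+y. indicator {..<d} y * ennreal (max 0 (y - c)) \<partial>lborel) = ennreal ((max 0 (d - c))\<^sup>2 / 2)"
proof (cases "c \<le> d")
  case True
  have "((\<lambda>y. y - c) has_integral (d - c)\<^sup>2 / 2 - (c - c)\<^sup>2 / 2) {c..d}"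
    using True by (intro fundamental_theorem_of_calculus)
      (auto intro!: derivative_eq_intros simp: has_real_derivative_iff_has_vector_derivative[symmetric])
  then have "(\<integral>\<^sup>+y. ennreal (y - c) * indicator {c..d} y \<partial>lborel) = ennreal ((d - c)\<^sup>2 / 2)"
    by (intro nn_integral_has_integral_lebesgue') auto
  moreover have "(\<integral>\<^sup>+y. indicator {..<d} y * ennreal (max 0 (y - c)) \<partial>lborel)
      = (\<integral>\<^sup>+y. ennreal (y - c) * indicator {c..d} y \<partial>lborel)"
    by (intro nn_integral_cong_AE eventually_mono[OF AE_lborel_singleton[of d]])
      (auto simp: indicator_def max_def)
  ultimately show ?thesis
    using True by simp
next
  case False
  then have "(\<lambda>y. indicator {..<d} y * ennreal (max 0 (y - c))) = (\<lambda>y. 0)"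
    by (auto simp: fun_eq_iff indicator_def max_def)
  then show ?thesis
    using False by simp
qed

text \<open>\<open>tri_gauge\<close> is the Minkowski gauge of the hexagon \<open>ref_tri - ref_tri\<close>: the overlap of
  \<open>ref_tri\<close> with its translate by \<open>-u\<close> is a translate of \<open>ref_tri\<close> scaled by \<open>1 - tri_gauge u\<close>.\<close>

lemma nn_integral_ref_tri_overlap:
  "(\<integral>\<^sup>+x. indicator ref_tri x * indicator ref_tri (x + u) \<partial>lborel)
     = ennreal ((max 0 (1 - tri_gauge u))\<^sup>2 / 2)"
proof -
  obtain a b where u: "u = (a, b)"
    by (cases u)
  define L where "L = max 0 (- b)"
  define m where "m = min 0 (a - b)"
  define U where "U = min 1 (1 - a)"
  have "(\<integral>\<^sup>+x. indicator ref_tri x * indicator ref_tri (x + u) \<partial>lborel)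
      = (\<integral>\<^sup>+x. indicator {x. fst x < U \<and> L < snd x \<and> snd x < fst x + m} x \<partial>(lborel \<Otimes>\<^sub>M lborel))"
    unfolding lborel_prod
    by (intro nn_integral_cong) (auto simp: u L_def m_def U_def ref_tri_def indicator_def)
  also have "\<dots> = (\<integral>\<^sup>+x1. \<integral>\<^sup>+x2. indicator {..<U} x1 * indicator {L<..<x1 + m} x2 \<partial>lborel \<partial>lborel)"
    by (subst lborel.nn_integral_fst[symmetric]) (auto intro!: nn_integral_cong simp: indicator_def)
  also have "\<dots> = (\<integral>\<^sup>+x1. indicator {..<U} x1 * ennreal (max 0 (x1 - (L - m))) \<partial>lborel)"
    by (intro nn_integral_cong) (auto simp: nn_integral_cmult max_def algebra_simps)
  also have "\<dots> = ennreal ((max 0 (U - (L - m)))\<^sup>2 / 2)"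
    by (rule nn_integral_ramp)
  also have "U - (L - m) = 1 - tri_gauge u"
    unfolding u U_def L_def m_def tri_gauge_def by simp
  finally show ?thesis .
qed

lemma nn_integral_ref_tri_pair:
  fixes f :: "real \<times> real \<Rightarrow> ennreal"
  assumes [measurable]: "f \<in> borel_measurable borel"
  shows "(\<integral>\<^sup>+z. indicator (ref_tri \<times> ref_tri) z * f (snd z - fst z) \<partial>lborel)
     = (\<integral>\<^sup>+u. ennreal ((max 0 (1 - tri_gauge u))\<^sup>2 / 2) * f u \<partial>lborel)"
proof -
  have "(\<integral>\<^sup>+z. indicator (ref_tri \<times> ref_tri) z * f (snd z - fst z) \<partial>lborel)
      = (\<integral>\<^sup>+z. indicator ref_tri (fst z) * indicator ref_tri (snd z) * f (snd z - fst z)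
          \<partial>(lborel \<Otimes>\<^sub>M lborel))"
    by (simp add: lborel_prod indicator_times)
  also have "\<dots> = (\<integral>\<^sup>+x. \<integral>\<^sup>+y. indicator ref_tri x * indicator ref_tri y * f (y - x) \<partial>lborel \<partial>lborel)"
    using lborel.nn_integral_fst[of "\<lambda>z. indicator ref_tri (fst z) * indicator ref_tri (snd z) * f (snd z - fst z)"]
    by simp
  also have "\<dots> = (\<integral>\<^sup>+x. \<integral>\<^sup>+u. indicator ref_tri x * indicator ref_tri (x + u) * f u \<partial>lborel \<partial>lborel)"
  proof (rule nn_integral_cong)
    fix x :: "real \<times> real"
    have "(\<integral>\<^sup>+y. indicator ref_tri x * indicator ref_tri y * f (y - x) \<partial>lborel)
        = (\<integral>\<^sup>+y. indicator ref_tri x * indicator ref_tri y * f (y - x) \<partial>distr lborel borel ((+) x))"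
      by (simp add: lborel_distr_plus)
    then show "(\<integral>\<^sup>+y. indicator ref_tri x * indicator ref_tri y * f (y - x) \<partial>lborel)
        = (\<integral>\<^sup>+u. indicator ref_tri x * indicator ref_tri (x + u) * f u \<partial>lborel)"
      by (simp add: nn_integral_distr)
  qed
  also have "\<dots> = (\<integral>\<^sup>+u. \<integral>\<^sup>+x. indicator ref_tri x * indicator ref_tri (x + u) * f u \<partial>lborel \<partial>lborel)"
    by (rule lborel_pair.Fubini') measurable
  also have "\<dots> = (\<integral>\<^sup>+u. ennreal ((max 0 (1 - tri_gauge u))\<^sup>2 / 2) * f u \<partial>lborel)"
    by (simp add: nn_integral_multc nn_integral_ref_tri_overlap)
  finally show ?thesis .
qed

section \<open>Integrals of even kernels homogeneous of degree -1\<close>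

lemma pred_mem_greaterThanLessThan [measurable (raw)]:
  fixes f g h :: "'a \<Rightarrow> real"
  assumes [measurable]: "f \<in> borel_measurable M" "g \<in> borel_measurable M" "h \<in> borel_measurable M"
  shows "Measurable.pred M (\<lambda>x. f x \<in> {g x<..<h x})"
  by simp

lemma pred_mem_greaterThan [measurable (raw)]:
  fixes f g :: "'a \<Rightarrow> real"
  assumes [measurable]: "f \<in> borel_measurable M" "g \<in> borel_measurable M"
  shows "Measurable.pred M (\<lambda>x. f x \<in> {g x<..})"
  by simp

text \<open>For the three pairs \<open>(p, q)\<close> used below, \<open>(r, y) \<mapsto> r *\<^sub>R p + y *\<^sub>R q\<close> has determinant
  \<open>\<plusminus>1\<close> and \<open>tri_gauge (r *\<^sub>R p + y *\<^sub>R q) = r\<close> for \<open>0 < y < r\<close>, so \<open>cone_integral W f p q\<close> is the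
  integral of \<open>W (tri_gauge u) * f u\<close> over the cone \<open>{r *\<^sub>R p + y *\<^sub>R q | 0 < y < r}\<close>.\<close>

definition cone_integral ::
    "(real \<Rightarrow> ennreal) \<Rightarrow> (real \<times> real \<Rightarrow> ennreal) \<Rightarrow> real \<times> real \<Rightarrow> real \<times> real \<Rightarrow> ennreal" where
  "cone_integral W f p q = (\<integral>\<^sup>+r. \<integral>\<^sup>+y. indicator {0<..} r * indicator {0<..<r} y * W r
      * f (r *\<^sub>R p + y *\<^sub>R q) \<partial>lborel \<partial>lborel)"

lemma cone_integral_homogeneous:
  fixes f :: "real \<times> real \<Rightarrow> ennreal" and W :: "real \<Rightarrow> ennreal" and p q :: "real \<times> real"
  assumes [measurable]: "f \<in> borel_measurable borel" "W \<in> borel_measurable borel"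
    and hom: "\<And>c u. 0 < c \<Longrightarrow> ennreal c * f (c *\<^sub>R u) = f u"
  shows "cone_integral W f p q
       = (\<integral>\<^sup>+r. indicator {0<..} r * W r \<partial>lborel) * (\<integral>\<^sup>+s. indicator {0<..<1} s * f (p + s *\<^sub>R q) \<partial>lborel)"
proof -
  let ?K = "\<integral>\<^sup>+s. indicator {0<..<1} s * f (p + s *\<^sub>R q) \<partial>lborel"
  have inner: "(\<integral>\<^sup>+y. indicator {0<..<r} y * f (r *\<^sub>R p + y *\<^sub>R q) \<partial>lborel) = ?K" if "0 < r" for r
  proof -
    have scale: "ennreal r * (indicator {0<..<r} (r * s) * f (r *\<^sub>R p + (r * s) *\<^sub>R q))
        = indicator {0<..<1} s * f (p + s *\<^sub>R q)" for s
    proof -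
      have "r *\<^sub>R p + (r * s) *\<^sub>R q = r *\<^sub>R (p + s *\<^sub>R q)"
        by (simp add: algebra_simps)
      moreover have "indicator {0<..<r} (r * s) = (indicator {0<..<1} s :: ennreal)"
        using \<open>0 < r\<close> by (simp add: indicator_def zero_less_mult_iff mult_less_cancel_left1)
      ultimately show ?thesis
        using hom[OF \<open>0 < r\<close>, of "p + s *\<^sub>R q"] by (metis mult.left_commute)
    qed
    have "(\<integral>\<^sup>+y. indicator {0<..<r} y * f (r *\<^sub>R p + y *\<^sub>R q) \<partial>lborel)
        = ennreal r * (\<integral>\<^sup>+s. indicator {0<..<r} (r * s) * f (r *\<^sub>R p + (r * s) *\<^sub>R q) \<partial>lborel)"
      using nn_integral_real_affine[of "\<lambda>y. indicator {0<..<r} y * f (r *\<^sub>R p + y *\<^sub>R q)" r 0] \<open>0 < r\<close>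
      by simp
    also have "\<dots> = ?K"
      by (subst nn_integral_cmult[symmetric]) (simp_all add: scale)
    finally show ?thesis .
  qed
  have "(\<integral>\<^sup>+y. indicator {0<..} r * indicator {0<..<r} y * W r * f (r *\<^sub>R p + y *\<^sub>R q) \<partial>lborel)
      = indicator {0<..} r * W r * ?K" for r
  proof (cases "0 < r")
    case True
    have "(\<integral>\<^sup>+y. indicator {0<..} r * indicator {0<..<r} y * W r * f (r *\<^sub>R p + y *\<^sub>R q) \<partial>lborel)
        = indicator {0<..} r * W r * (\<integral>\<^sup>+y. indicator {0<..<r} y * f (r *\<^sub>R p + y *\<^sub>R q) \<partial>lborel)"
      by (subst nn_integral_cmult[symmetric]) (auto simp: ac_simps)
    also have "\<dots> = indicator {0<..} r * W r * ?K"
      using inner[OF True] by simp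
    finally show ?thesis .
  qed simp
  then show ?thesis
    unfolding cone_integral_def by (simp add: nn_integral_multc)
qed

lemma nn_integral_even_pair:
  fixes g :: "real \<times> real \<Rightarrow> ennreal"
  assumes [measurable]: "g \<in> borel_measurable borel" and even: "\<And>u. g (- u) = g u"
  shows "(\<integral>\<^sup>+u. g u \<partial>lborel) = 2 * (\<integral>\<^sup>+a. indicator {0<..} a * (\<integral>\<^sup>+b. g (a, b) \<partial>lborel) \<partial>lborel)"
proof -
  define G where "G a = (\<integral>\<^sup>+b. g (a, b) \<partial>lborel)" for a
  have [measurable]: "G \<in> borel_measurable borel"
    unfolding G_def by measurable
  have G_even: "G (- a) = G a" for a
    using nn_integral_real_affine[of "\<lambda>b. g (- a, b)" "-1" 0] even[of "(a, _)"]
    by (simp add: G_def)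
  have "(\<integral>\<^sup>+u. g u \<partial>lborel) = (\<integral>\<^sup>+a. G a \<partial>lborel)"
    using lborel.nn_integral_fst[of g lborel] by (simp add: G_def lborel_prod)
  also have "\<dots> = (\<integral>\<^sup>+a. indicator {0<..} a * G a + indicator {..<0} a * G a \<partial>lborel)"
    by (intro nn_integral_cong_AE eventually_mono[OF AE_lborel_singleton[of 0]])
      (auto simp: indicator_def)
  also have "\<dots> = (\<integral>\<^sup>+a. indicator {0<..} a * G a \<partial>lborel) + (\<integral>\<^sup>+a. indicator {..<0} a * G a \<partial>lborel)"
    by (rule nn_integral_add) auto
  also have "(\<integral>\<^sup>+a. indicator {..<0} a * G a \<partial>lborel) = (\<integral>\<^sup>+a. indicator {0<..} a * G a \<partial>lborel)"
    using nn_integral_real_affine[of "\<lambda>a. indicator {..<0} a * G a" "-1" 0]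
    by (simp add: G_even indicator_def)
  finally show ?thesis
    by (simp add: G_def mult_2)
qed

lemma nn_integral_right_half_plane_tri_gauge:
  fixes f :: "real \<times> real \<Rightarrow> ennreal" and W :: "real \<Rightarrow> ennreal"
  assumes [measurable]: "f \<in> borel_measurable borel" "W \<in> borel_measurable borel"
  shows "(\<integral>\<^sup>+a. indicator {0<..} a * (\<integral>\<^sup>+b. W (tri_gauge (a, b)) * f (a, b) \<partial>lborel) \<partial>lborel)
       = cone_integral W f (1, 0) (0, 1) + cone_integral W f (0, 1) (1, 0) + cone_integral W f (0, -1) (1, 1)"
proof -
  \<comment> \<open>up to null sets, the half plane \<open>a > 0\<close> is the union of three cones on which
    \<open>tri_gauge (a, b)\<close> is \<open>a\<close>, \<open>b\<close> and \<open>a - b\<close> respectively\<close>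
  define g1 where "g1 a b = indicator {0<..} a * indicator {0<..<a} b * W a * f (a, b)" for a b
  define g2 where "g2 a b = indicator {0<..} a * indicator {a<..} b * W b * f (a, b)" for a b
  define g3 where "g3 a b = indicator {0<..} a * indicator {..<0} b * W (a - b) * f (a, b)" for a b
  have [measurable]: "case_prod g1 \<in> borel_measurable (lborel \<Otimes>\<^sub>M lborel)"
    "case_prod g2 \<in> borel_measurable (lborel \<Otimes>\<^sub>M lborel)"
    "case_prod g3 \<in> borel_measurable (lborel \<Otimes>\<^sub>M lborel)"
    unfolding g1_def g2_def g3_def by measurable
  have "indicator {0<..} a * (\<integral>\<^sup>+b. W (tri_gauge (a, b)) * f (a, b) \<partial>lborel)
      = (\<integral>\<^sup>+b. g1 a b \<partial>lborel) + (\<integral>\<^sup>+b. g2 a b \<partial>lborel) + (\<integral>\<^sup>+b. g3 a b \<partial>lborel)" for a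
  proof -
    have "AE b in lborel. b \<noteq> 0 \<and> b \<noteq> a"
      using AE_lborel_singleton[of 0] AE_lborel_singleton[of a] by eventually_elim simp
    then have "indicator {0<..} a * (\<integral>\<^sup>+b. W (tri_gauge (a, b)) * f (a, b) \<partial>lborel)
        = (\<integral>\<^sup>+b. g1 a b + g2 a b + g3 a b \<partial>lborel)"
      by (subst nn_integral_cmult[symmetric], simp)
        (elim nn_integral_cong_AE[OF eventually_mono],
          auto simp: g1_def g2_def g3_def indicator_def tri_gauge_def max_def)
    then show ?thesis
      by (simp add: nn_integral_add)
  qed
  then have "(\<integral>\<^sup>+a. indicator {0<..} a * (\<integral>\<^sup>+b. W (tri_gauge (a, b)) * f (a, b) \<partial>lborel) \<partial>lborel)
      = (\<integral>\<^sup>+a. \<integral>\<^sup>+b. g1 a b \<partial>lborel \<partial>lborel) + (\<integral>\<^sup>+a. \<integral>\<^sup>+b. g2 a b \<partial>lborel \<partial>lborel)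
        + (\<integral>\<^sup>+a. \<integral>\<^sup>+b. g3 a b \<partial>lborel \<partial>lborel)"
    by (simp add: nn_integral_add)
  also have "(\<integral>\<^sup>+a. \<integral>\<^sup>+b. g1 a b \<partial>lborel \<partial>lborel) = cone_integral W f (1, 0) (0, 1)"
    by (simp add: g1_def cone_integral_def)
  also have "(\<integral>\<^sup>+a. \<integral>\<^sup>+b. g2 a b \<partial>lborel \<partial>lborel) = cone_integral W f (0, 1) (1, 0)"
    unfolding cone_integral_def by (subst lborel_pair.Fubini', simp)
      (auto intro!: nn_integral_cong simp: g2_def indicator_def)
  also have "(\<integral>\<^sup>+a. \<integral>\<^sup>+b. g3 a b \<partial>lborel \<partial>lborel)
      = (\<integral>\<^sup>+a. \<integral>\<^sup>+r. indicator {0<..} a * indicator {..<0} (a - r) * W r * f (a, a - r) \<partial>lborel \<partial>lborel)"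
    using nn_integral_real_affine[of "g3 a" "-1" a for a] by (simp add: g3_def)
  also have "\<dots> = cone_integral W f (0, -1) (1, 1)"
    unfolding cone_integral_def by (subst lborel_pair.Fubini', simp)
      (auto intro!: nn_integral_cong simp: indicator_def)
  finally show ?thesis .
qed

lemma nn_integral_tri_gauge_homogeneous:
  fixes f :: "real \<times> real \<Rightarrow> ennreal" and W :: "real \<Rightarrow> ennreal"
  assumes [measurable]: "f \<in> borel_measurable borel" "W \<in> borel_measurable borel"
    and hom: "\<And>c u. 0 < c \<Longrightarrow> ennreal c * f (c *\<^sub>R u) = f u"
    and even: "\<And>u. f (- u) = f u"
  shows "(\<integral>\<^sup>+u. W (tri_gauge u) * f u \<partial>lborel)
       = 2 * (\<integral>\<^sup>+r. indicator {0<..} r * W r \<partial>lborel)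
         * (\<integral>\<^sup>+s. indicator {0<..<1} s * (f (s, 1) + f (1, s) + f (s, s - 1)) \<partial>lborel)"
  using nn_integral_even_pair[of "\<lambda>u. W (tri_gauge u) * f u"]
    nn_integral_right_half_plane_tri_gauge[OF assms(1,2)] cone_integral_homogeneous[OF assms(1-3)]
  by (simp add: even nn_integral_add distrib_left add_ac mult.assoc)

lemma nn_integral_overlap_profile:
  "(\<integral>\<^sup>+r. indicator {0<..} r * ennreal ((max 0 (1 - r))\<^sup>2 / 2) \<partial>lborel) = ennreal (1 / 6)"
proof -
  have "((\<lambda>r. (1 - r)\<^sup>2 / 2) has_integral (\<lambda>r. - ((1 - r) ^ 3) / 6) 1 - (\<lambda>r. - ((1 - r) ^ 3) / 6) 0) {0..1::real}"
    by (rule fundamental_theorem_of_calculus)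
      (auto intro!: derivative_eq_intros simp: has_real_derivative_iff_has_vector_derivative[symmetric]
        power2_eq_square field_simps)
  then have "(\<integral>\<^sup>+r. ennreal ((1 - r)\<^sup>2 / 2) * indicator {0..1} r \<partial>lborel) = ennreal (1 / 6)"
    by (intro nn_integral_has_integral_lebesgue') auto
  moreover have "(\<integral>\<^sup>+r. indicator {0<..} r * ennreal ((max 0 (1 - r))\<^sup>2 / 2) \<partial>lborel)
      = (\<integral>\<^sup>+r. ennreal ((1 - r)\<^sup>2 / 2) * indicator {0..1} r \<partial>lborel)"
    by (intro nn_integral_cong_AE eventually_mono[OF AE_lborel_singleton[of 0]])
      (auto simp: indicator_def)
  ultimately show ?thesis
    by simp
qed

section \<open>The Galerkin entry\<close>

lemma independent_pair_scaleR_eq_0: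
  fixes v w :: "'a::real_vector"
  assumes "v \<noteq> w" and "independent {v, w}" and "a *\<^sub>R v + b *\<^sub>R w = 0"
  shows "a = 0 \<and> b = 0"
proof -
  let ?c = "\<lambda>x. if x = v then a else b"
  have "(\<Sum>x\<in>{v, w}. ?c x *\<^sub>R x) = 0"
    using assms(1,3) by simp
  then have "?c x = 0" if "x \<in> {v, w}" for x
    using independent_explicit_finite_subsets[THEN iffD1, OF assms(2), rule_format, of "{v, w}" ?c x] that
    by simp
  then show ?thesis
    using assms(1) by (metis insert_iff)
qed

lemma independent_pair_lines_nonzero:
  fixes v w :: "'a::real_vector"
  assumes "v \<noteq> w" and "independent {v, w}"
  shows "v \<noteq> 0" "w \<noteq> 0" "w + v \<noteq> 0"
    and "x *\<^sub>R v + w \<noteq> 0" "x *\<^sub>R w + v \<noteq> 0" "x *\<^sub>R (w + v) - w \<noteq> 0"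
proof -
  note indep = independent_pair_scaleR_eq_0[OF assms]
  show "v \<noteq> 0"
    using indep[of 1 0] by auto
  show "w \<noteq> 0"
    using indep[of 0 1] by auto
  show "w + v \<noteq> 0"
    using indep[of 1 1] by (auto simp: add.commute)
  show "x *\<^sub>R v + w \<noteq> 0"
    using indep[of x 1] by auto
  show "x *\<^sub>R w + v \<noteq> 0"
    using indep[of 1 x] by (auto simp: add.commute)
  have "x *\<^sub>R (w + v) - w = x *\<^sub>R v + (x - 1) *\<^sub>R w"
    by (simp add: algebra_simps)
  then show "x *\<^sub>R (w + v) - w \<noteq> 0"
    using indep[of x "x - 1"] by auto
qed

definition reduced_kernel :: "'a::real_normed_vector \<Rightarrow> 'a \<Rightarrow> real \<Rightarrow> real" where
  "reduced_kernel v w \<eta> = 1 / norm (\<eta> *\<^sub>R v + w) + 1 / norm (\<eta> *\<^sub>R w + v) + 1 / norm (\<eta> *\<^sub>R (w + v) - w)"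

definition reduced_antideriv :: "'a::real_inner \<Rightarrow> 'a \<Rightarrow> real \<Rightarrow> real" where
  "reduced_antideriv v w \<eta> = F_aux ((norm v)\<^sup>2) (2 * (v \<bullet> w)) ((norm w)\<^sup>2) \<eta>
     + F_aux ((norm w)\<^sup>2) (2 * (w \<bullet> v)) ((norm v)\<^sup>2) \<eta>
     + F_aux ((norm (w + v))\<^sup>2) (- 2 * ((w + v) \<bullet> w)) ((norm w)\<^sup>2) \<eta>"

lemma has_real_derivative_reduced_antideriv:
  fixes v w :: "'a::real_inner"
  assumes "v \<noteq> w" and "independent {v, w}"
  shows "(reduced_antideriv v w has_real_derivative reduced_kernel v w \<eta>) (at \<eta>)"
proof -
  note nz = independent_pair_lines_nonzero[OF assms]
  have "(F_aux ((norm (w + v))\<^sup>2) (2 * ((w + v) \<bullet> - w)) ((norm (- w))\<^sup>2) has_real_derivative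
      1 / norm (\<eta> *\<^sub>R (w + v) + - w)) (at \<eta>)"
    using nz by (intro F_aux_line_has_real_derivative) auto
  then show ?thesis
    unfolding reduced_antideriv_def reduced_kernel_def
    using nz by (auto intro!: DERIV_add F_aux_line_has_real_derivative)
qed

lemma continuous_on_reduced_kernel:
  fixes v w :: "'a::real_normed_vector"
  assumes "v \<noteq> w" and "independent {v, w}"
  shows "continuous_on S (reduced_kernel v w)"
  unfolding reduced_kernel_def
  using independent_pair_lines_nonzero[OF assms] by (intro continuous_intros) auto

lemma has_integral_reduced_kernel:
  fixes v w :: "'a::real_inner"
  assumes "v \<noteq> w" and "independent {v, w}"
  shows "(reduced_kernel v w has_integral reduced_antideriv v w 1 - reduced_antideriv v w 0) {0<..<1}"
proof -
  have "(reduced_kernel v w has_integral reduced_antideriv v w 1 - reduced_antideriv v w 0) {0..1}"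
    by (intro fundamental_theorem_of_calculus)
      (auto intro: has_field_derivative_at_within has_real_derivative_reduced_antideriv[OF assms]
        simp: has_real_derivative_iff_has_vector_derivative[symmetric])
  then show ?thesis
    using has_integral_open_interval[of "reduced_kernel v w" _ 0 1] by simp
qed

lemma interval_integral_reduced_kernel:
  fixes v w :: "'a::real_inner"
  assumes "v \<noteq> w" and "independent {v, w}"
  shows "(LBINT \<eta>=0..1. reduced_kernel v w \<eta>) = reduced_antideriv v w 1 - reduced_antideriv v w 0"
proof -
  have "(LBINT \<eta>=ereal 0..ereal 1. reduced_kernel v w \<eta>)
      = reduced_antideriv v w 1 - reduced_antideriv v w 0"
    using continuous_on_reduced_kernel[OF assms] has_real_derivative_reduced_antideriv[OF assms]
    by (intro interval_integral_FTC_finite)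
      (auto intro: has_field_derivative_at_within simp: has_real_derivative_iff_has_vector_derivative[symmetric])
  then show ?thesis
    by (simp add: zero_ereal_def[symmetric] one_ereal_def[symmetric])
qed

lemma ennreal_inverse_norm_scaleR:
  fixes x :: "'a::real_normed_vector"
  assumes "0 < c"
  shows "ennreal c * ennreal (1 / norm (c *\<^sub>R x)) = ennreal (1 / norm x)"
proof -
  have "ennreal c * ennreal (1 / norm (c *\<^sub>R x)) = ennreal (c * (1 / (c * norm x)))"
    using assms by (simp add: ennreal_mult[symmetric])
  also have "c * (1 / (c * norm x)) = 1 / norm x"
    using assms by simp
  finally show ?thesis .
qed

lemma borel_measurable_inverse_norm_lincomb [measurable]:
  fixes v w :: "'a::real_normed_vector"
  shows "(\<lambda>u::real \<times> real. ennreal (1 / norm (fst u *\<^sub>R v + snd u *\<^sub>R w))) \<in> borel_measurable borel"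
proof -
  have "(\<lambda>u::real \<times> real. fst u *\<^sub>R v + snd u *\<^sub>R w) \<in> borel_measurable borel"
    by (intro borel_measurable_continuous_onI continuous_intros)
  then show ?thesis
    by measurable
qed

lemma nn_integral_tri_gauge_inverse_norm:
  fixes v w :: "'a::real_normed_vector"
  shows "(\<integral>\<^sup>+u. ennreal ((max 0 (1 - tri_gauge u))\<^sup>2 / 2) * ennreal (1 / norm (fst u *\<^sub>R v + snd u *\<^sub>R w)) \<partial>lborel)
       = ennreal (1 / 3) * (\<integral>\<^sup>+s. ennreal (reduced_kernel v w s) * indicator {0<..<1} s \<partial>lborel)"
proof -
  define f where "f u = ennreal (1 / norm (fst u *\<^sub>R v + snd u *\<^sub>R w))" for u :: "real \<times> real"
  have f_meas: "f \<in> borel_measurable borel"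
    unfolding f_def by measurable
  have "fst (c *\<^sub>R u) *\<^sub>R v + snd (c *\<^sub>R u) *\<^sub>R w = c *\<^sub>R (fst u *\<^sub>R v + snd u *\<^sub>R w)" for c u
    by (simp add: algebra_simps)
  then have f_hom: "ennreal c * f (c *\<^sub>R u) = f u" if "0 < c" for c u
    unfolding f_def using ennreal_inverse_norm_scaleR[OF that] by simp
  have "fst (- u) *\<^sub>R v + snd (- u) *\<^sub>R w = - (fst u *\<^sub>R v + snd u *\<^sub>R w)" for u
    by (simp add: algebra_simps)
  then have f_even: "f (- u) = f u" for u
    by (simp only: f_def norm_minus_cancel)
  have "f (s, 1) + f (1, s) + f (s, s - 1) = ennreal (reduced_kernel v w s)" for s
  proof -
    have "s *\<^sub>R v + (s - 1) *\<^sub>R w = s *\<^sub>R (w + v) - w"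
      by (simp add: algebra_simps)
    then show ?thesis
      by (simp add: f_def reduced_kernel_def ennreal_plus add.commute)
  qed
  then have "(\<integral>\<^sup>+u. ennreal ((max 0 (1 - tri_gauge u))\<^sup>2 / 2) * f u \<partial>lborel)
      = ennreal 2 * ennreal (1 / 6) * (\<integral>\<^sup>+s. ennreal (reduced_kernel v w s) * indicator {0<..<1} s \<partial>lborel)"
    using nn_integral_tri_gauge_homogeneous[OF f_meas _ f_hom f_even, of "\<lambda>r. ennreal ((max 0 (1 - r))\<^sup>2 / 2)"]
    by (simp add: nn_integral_overlap_profile mult.commute)
  also have "ennreal 2 * ennreal (1 / 6) = ennreal (1 / 3)"
  proof -
    have "ennreal 2 * ennreal (1 / 6) = ennreal (2 * (1 / 6))"
      by (rule ennreal_mult[symmetric]) auto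
    then show ?thesis
      by simp
  qed
  finally show ?thesis
    unfolding f_def .
qed

lemma nn_integral_ref_tri_inverse_distance:
  fixes p v w :: "real^3"
  shows "(\<integral>\<^sup>+z. ennreal (indicator (ref_tri \<times> ref_tri) z
            * (1 / norm (chi_tau p v w (fst z) - chi_tau p v w (snd z)))) \<partial>lborel)
       = ennreal (1 / 3) * (\<integral>\<^sup>+s. ennreal (reduced_kernel v w s) * indicator {0<..<1} s \<partial>lborel)"
proof -
  let ?f = "\<lambda>u::real \<times> real. ennreal (1 / norm (fst u *\<^sub>R v + snd u *\<^sub>R w))"
  have "norm (chi_tau p v w (fst z) - chi_tau p v w (snd z))
      = norm (fst (snd z - fst z) *\<^sub>R v + snd (snd z - fst z) *\<^sub>R w)" for z :: "(real \<times> real) \<times> real \<times> real"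
  proof -
    have "chi_tau p v w (fst z) - chi_tau p v w (snd z)
        = - (fst (snd z - fst z) *\<^sub>R v + snd (snd z - fst z) *\<^sub>R w)"
      by (simp add: chi_tau_def algebra_simps)
    then show ?thesis
      by (simp only: norm_minus_cancel)
  qed
  then have "(\<integral>\<^sup>+z. ennreal (indicator (ref_tri \<times> ref_tri) z
            * (1 / norm (chi_tau p v w (fst z) - chi_tau p v w (snd z)))) \<partial>lborel)
      = (\<integral>\<^sup>+z. indicator (ref_tri \<times> ref_tri) z * ?f (snd z - fst z) \<partial>lborel)"
    by (intro nn_integral_cong) (simp add: indicator_def)
  also have "\<dots> = (\<integral>\<^sup>+u. ennreal ((max 0 (1 - tri_gauge u))\<^sup>2 / 2) * ?f u \<partial>lborel)"
    by (rule nn_integral_ref_tri_pair) measurable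
  finally show ?thesis
    unfolding nn_integral_tri_gauge_inverse_norm .
qed

lemma set_integral_ref_tri_inverse_distance:
  fixes p v w :: "real^3"
  assumes "v \<noteq> w" and "independent {v, w}"
  shows "set_integrable lborel (ref_tri \<times> ref_tri)
      (\<lambda>z. 1 / norm (chi_tau p v w (fst z) - chi_tau p v w (snd z)))"
    and "(LINT z:ref_tri \<times> ref_tri|lborel. 1 / norm (chi_tau p v w (fst z) - chi_tau p v w (snd z)))
      = (reduced_antideriv v w 1 - reduced_antideriv v w 0) / 3"
proof -
  define D where "D = reduced_antideriv v w 1 - reduced_antideriv v w 0"
  note kernel_integral = has_integral_reduced_kernel[OF assms, folded D_def]
  have kernel_nonneg: "0 \<le> reduced_kernel v w s" for s
    by (simp add: reduced_kernel_def)
  have "0 \<le> D"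
    using has_integral_nonneg[OF kernel_integral kernel_nonneg] .
  let ?g = "\<lambda>z. indicator (ref_tri \<times> ref_tri) z * (1 / norm (chi_tau p v w (fst z) - chi_tau p v w (snd z)))"
  have [measurable]: "ref_tri \<times> ref_tri \<in> sets borel"
    by (simp add: open_ref_tri open_Times)
  have [measurable]: "(\<lambda>z. chi_tau p v w (fst z) - chi_tau p v w (snd z)) \<in> borel_measurable borel"
    unfolding chi_tau_def by (intro borel_measurable_continuous_onI continuous_intros)
  then have g_meas: "?g \<in> borel_measurable lborel"
    by measurable
  have "(\<integral>\<^sup>+z. ennreal (?g z) \<partial>lborel) = ennreal (D / 3)"
    unfolding nn_integral_ref_tri_inverse_distance
      nn_integral_has_integral_lebesgue'[OF kernel_nonneg kernel_integral]
    using \<open>0 \<le> D\<close> by (simp add: ennreal_mult[symmetric])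
  then have "integrable lborel ?g" and g_integral: "integral\<^sup>L lborel ?g = D / 3"
    using nn_integral_eq_integrable[OF g_meas _, of "D / 3"] \<open>0 \<le> D\<close> by auto
  then show "set_integrable lborel (ref_tri \<times> ref_tri)
      (\<lambda>z. 1 / norm (chi_tau p v w (fst z) - chi_tau p v w (snd z)))"
    unfolding set_integrable_def real_scaleR_def by blast
  show "(LINT z:ref_tri \<times> ref_tri|lborel. 1 / norm (chi_tau p v w (fst z) - chi_tau p v w (snd z)))
      = D / 3"
    unfolding set_lebesgue_integral_def real_scaleR_def g_integral ..
qed

theorem mainTheorem1:
  fixes p v w :: "real^3"
  assumes "v \<noteq> w" and "independent {v, w}"
  shows "set_integrable lborel (ref_tri \<times> ref_tri)
           (\<lambda>z. 1 / norm (chi_tau p v w (fst z) - chi_tau p v w (snd z)))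
       \<and> galerkin_I p v w = (gram_tau v w)^2 / (12 * pi) *
           (LBINT \<eta>=0..1. 1 / norm (\<eta> *\<^sub>R v + w) + 1 / norm (\<eta> *\<^sub>R w + v)
                            + 1 / norm (\<eta> *\<^sub>R (w + v) - w))
       \<and> galerkin_I p v w = (gram_tau v w)^2 / (12 * pi) *
           ((F_aux ((norm v)^2) (2 * (v \<bullet> w)) ((norm w)^2) 1
              - F_aux ((norm v)^2) (2 * (v \<bullet> w)) ((norm w)^2) 0)
          + (F_aux ((norm w)^2) (2 * (w \<bullet> v)) ((norm v)^2) 1
              - F_aux ((norm w)^2) (2 * (w \<bullet> v)) ((norm v)^2) 0)
          + (F_aux ((norm (w + v))^2) (- 2 * ((w + v) \<bullet> w)) ((norm w)^2) 1
              - F_aux ((norm (w + v))^2) (- 2 * ((w + v) \<bullet> w)) ((norm w)^2) 0))"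
proof -
  define D where "D = reduced_antideriv v w 1 - reduced_antideriv v w 0"
  have "galerkin_I p v w = (gram_tau v w)^2 / (4 * pi) * (D / 3)"
    unfolding galerkin_I_def set_integral_ref_tri_inverse_distance(2)[OF assms] D_def ..
  then have galerkin: "galerkin_I p v w = (gram_tau v w)^2 / (12 * pi) * D"
    by simp
  have D_eq: "D = (F_aux ((norm v)^2) (2 * (v \<bullet> w)) ((norm w)^2) 1
              - F_aux ((norm v)^2) (2 * (v \<bullet> w)) ((norm w)^2) 0)
          + (F_aux ((norm w)^2) (2 * (w \<bullet> v)) ((norm v)^2) 1
              - F_aux ((norm w)^2) (2 * (w \<bullet> v)) ((norm v)^2) 0)
          + (F_aux ((norm (w + v))^2) (- 2 * ((w + v) \<bullet> w)) ((norm w)^2) 1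
              - F_aux ((norm (w + v))^2) (- 2 * ((w + v) \<bullet> w)) ((norm w)^2) 0)"
    unfolding D_def reduced_antideriv_def by linarith
  show ?thesis
    using set_integral_ref_tri_inverse_distance(1)[OF assms] galerkin
      interval_integral_reduced_kernel[OF assms, folded D_def]
    unfolding reduced_kernel_def D_eq by (simp only:)
qed

end
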